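(* Let $t\le 1$ and let $M\in\mathbb{R}^{n\times n}$ be a distance matrix (i.e. $M_{ij}\ge 0$, $M_{ii}=0$, $M_{ij}=M_{ji}$, $M_{ik}\le M_{ij}+M_{jk}$ for all $i,j,k$). Let $\bar M=\sum_{i,j}M_{ij}$. Then for all $\tilde x,\tilde y,\tilde z\in\tilde\Delta_n$, $$\big(\tilde d^t_M(\tilde x,\tilde z)\big)^{2-t}\le \bar M^{\,1-t}\Big(\tilde d^t_M(\tilde x,\tilde y)+\tilde d^t_M(\tilde y,\tilde z)\Big).$$
   Context: $t^*=1/(2-t)$. All powers of vectors and matrices are entrywise. The co-simplex is $\tilde\Delta_n=\{\tilde p\in\mathbb{R}^n:\tilde p\ge 0,\ \sum_i \tilde p_i^{1/t^*}=1\}$. For $\tilde r,\tilde c\in\tilde\Delta_n$, the co-polytope is $\tilde U_n(\tilde r,\tilde c)=\{\tilde P\in\mathbb{R}_{\ge0}^{n\times n}: \sum_j\tilde P_{ij}^{1/t^*}=\tilde r_i^{1/t^*}\ \forall i,\ \sum_i\tilde P_{ij}^{1/t^*}=\tilde c_j^{1/t^*}\ \forall j\}$. $\langle A,B\rangle=\sum_{ij}A_{ij}B_{ij}$. The (unregularized) measured cost is $\tilde d^t_M(\tilde r,\tilde c)=\min_{\tilde P\in\tilde U_n(\tilde r,\tilde c)}\langle\tilde P,M\rangle$. *)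

theory Defs
  imports "HOL-Analysis.Analysis"
begin

text \<open>Index set of size n is a finite type 'n. t* = 1/(2-t), so 1/t* = 2 - t.\<close>

definition tstar :: "real \<Rightarrow> real" where
  "tstar t = 1 / (2 - t)"

definition co_simplex :: "real \<Rightarrow> ('n::finite \<Rightarrow> real) set" where
  "co_simplex t = {p. (\<forall>i. p i \<ge> 0) \<and> (\<Sum>i\<in>UNIV. p i powr (1 / tstar t)) = 1}"

definition co_polytope :: "real \<Rightarrow> ('n::finite \<Rightarrow> real) \<Rightarrow> ('n \<Rightarrow> real) \<Rightarrow> ('n \<Rightarrow> 'n \<Rightarrow> real) set" where
  "co_polytope t r c = {P. (\<forall>i j. P i j \<ge> 0)
      \<and> (\<forall>i. (\<Sum>j\<in>UNIV. P i j powr (1 / tstar t)) = r i powr (1 / tstar t))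
      \<and> (\<forall>j. (\<Sum>i\<in>UNIV. P i j powr (1 / tstar t)) = c j powr (1 / tstar t))}"

definition frob :: "('n::finite \<Rightarrow> 'n \<Rightarrow> real) \<Rightarrow> ('n \<Rightarrow> 'n \<Rightarrow> real) \<Rightarrow> real" where
  "frob A B = (\<Sum>i\<in>UNIV. \<Sum>j\<in>UNIV. A i j * B i j)"

text \<open>Measured cost: minimum of <P,M> over the co-polytope (written as the infimum;
  the minimum is attained since the co-polytope is nonempty and compact).\<close>
definition measured_cost :: "real \<Rightarrow> ('n::finite \<Rightarrow> 'n \<Rightarrow> real) \<Rightarrow> ('n \<Rightarrow> real) \<Rightarrow> ('n \<Rightarrow> real) \<Rightarrow> real" where
  "measured_cost t M r c = Inf ((\<lambda>P. frob P M) ` co_polytope t r c)"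

definition distance_matrix :: "('n::finite \<Rightarrow> 'n \<Rightarrow> real) \<Rightarrow> bool" where
  "distance_matrix M \<longleftrightarrow> (\<forall>i j. M i j \<ge> 0) \<and> (\<forall>i. M i i = 0) \<and> (\<forall>i j. M i j = M j i)
     \<and> (\<forall>i j k. M i k \<le> M i j + M j k)"

end

theory Submission
  imports Defs
begin

text \<open>Put s = 2 - t \<ge> 1. A matrix P lies in the co-polytope of (r, c) iff its entrywise power P^s
  is a classical transport plan between r^s and c^s. Gluing the classical plans P1^s and P2^s along
  y^s gives a classical plan Q between x^s and z^s whose M-cost is at most the sum of theirs, by the
  triangle inequality. Then Q^(1/s) is in the co-polytope of (x, z), and Hoelder's inequality with
  weights M gives <Q^(1/s), M>^s \<le> (\<Sum>M)^(s-1) <Q, M>. Entries of co-polytope matrices lie in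
  [0, 1], so P^s \<le> P entrywise, and taking infima over P1 and P2 concludes.\<close>

lemma powr_mult_powr_le_convex_comb:
  fixes q c \<theta> :: real
  assumes "0 \<le> \<theta>" "\<theta> \<le> 1" "0 \<le> q" "0 < c"
  shows "q powr \<theta> * c powr (1 - \<theta>) \<le> \<theta> * q + (1 - \<theta>) * c"
proof (cases "q = 0")
  case True
  with assms show ?thesis by (cases "\<theta> = 0") auto
next
  case False
  with assms show ?thesis using Youngs_inequality_0[of \<theta> "1 - \<theta>" q c] by auto
qed

lemma sum_mult_powr_le:
  fixes m q :: "'a \<Rightarrow> real"
  assumes S: "finite S" and m: "\<And>i. i \<in> S \<Longrightarrow> 0 \<le> m i" and q: "\<And>i. i \<in> S \<Longrightarrow> 0 \<le> q i"
    and \<theta>: "0 < \<theta>" "\<theta> \<le> 1"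
  shows "(\<Sum>i\<in>S. m i * q i powr \<theta>) \<le> (\<Sum>i\<in>S. m i * q i) powr \<theta> * (\<Sum>i\<in>S. m i) powr (1 - \<theta>)"
proof -
  define A where "A = (\<Sum>i\<in>S. m i * q i)"
  define B where "B = (\<Sum>i\<in>S. m i)"
  have "A \<ge> 0" "B \<ge> 0"
    unfolding A_def B_def using m q by (auto intro: sum_nonneg)
  show ?thesis
  proof (cases "A = 0 \<or> B = 0")
    case True
    have "m i * q i powr \<theta> = 0" if "i \<in> S" for i
    proof -
      have "m i * q i = 0 \<or> m i = 0"
        using True that m q S unfolding A_def B_def by (auto simp: sum_nonneg_eq_0_iff)
      then show ?thesis using \<theta> by auto
    qed
    then have "(\<Sum>i\<in>S. m i * q i powr \<theta>) = 0" by (intro sum.neutral) blast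
    then show ?thesis by simp
  next
    case False
    with \<open>A \<ge> 0\<close> \<open>B \<ge> 0\<close> have "A > 0" "B > 0" by auto
    define c where "c = A / B" \<comment> \<open>comparing each q i with the mean c turns AM-GM into Hoelder\<close>
    have "c > 0" using \<open>A > 0\<close> \<open>B > 0\<close> by (simp add: c_def)
    have "(\<Sum>i\<in>S. m i * q i powr \<theta>) * c powr (1 - \<theta>) = (\<Sum>i\<in>S. m i * (q i powr \<theta> * c powr (1 - \<theta>)))"
      by (simp add: sum_distrib_right mult.assoc)
    also have "\<dots> \<le> (\<Sum>i\<in>S. m i * (\<theta> * q i + (1 - \<theta>) * c))"
      using m q \<theta> \<open>c > 0\<close> by (intro sum_mono mult_left_mono powr_mult_powr_le_convex_comb) auto
    also have "\<dots> = (\<Sum>i\<in>S. \<theta> * (m i * q i) + (1 - \<theta>) * c * m i)"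
      by (simp add: algebra_simps)
    also have "\<dots> = \<theta> * A + (1 - \<theta>) * c * B"
      by (simp add: A_def B_def sum.distrib sum_distrib_left)
    also have "\<dots> = A"
      using \<open>B > 0\<close> by (simp add: c_def field_simps)
    also have "A = A powr \<theta> * B powr (1 - \<theta>) * c powr (1 - \<theta>)"
      using \<open>A > 0\<close> \<open>B > 0\<close> by (simp add: c_def powr_divide flip: powr_add)
    finally show ?thesis
      using \<open>c > 0\<close> by (simp add: A_def B_def)
  qed
qed

lemma powr_sum_mult_powr_inverse_le:
  fixes m q :: "'a \<Rightarrow> real"
  assumes "finite S" "\<And>i. i \<in> S \<Longrightarrow> 0 \<le> m i" "\<And>i. i \<in> S \<Longrightarrow> 0 \<le> q i" and s: "1 \<le> s"
  shows "(\<Sum>i\<in>S. m i * q i powr (1 / s)) powr s \<le> (\<Sum>i\<in>S. m i) powr (s - 1) * (\<Sum>i\<in>S. m i * q i)"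
proof -
  define A where "A = (\<Sum>i\<in>S. m i * q i)"
  define B where "B = (\<Sum>i\<in>S. m i)"
  have "A \<ge> 0" "B \<ge> 0"
    unfolding A_def B_def using assms by (auto intro: sum_nonneg mult_nonneg_nonneg)
  have "(\<Sum>i\<in>S. m i * q i powr (1 / s)) powr s \<le> (A powr (1 / s) * B powr (1 - 1 / s)) powr s"
    using assms unfolding A_def B_def
    by (intro powr_mono2 sum_mult_powr_le sum_nonneg mult_nonneg_nonneg) auto
  also have "\<dots> = A powr (1 / s * s) * B powr ((1 - 1 / s) * s)"
    using \<open>A \<ge> 0\<close> \<open>B \<ge> 0\<close> by (simp add: powr_mult powr_powr)
  also have "1 / s * s = 1"
    using s by simp
  also have "(1 - 1 / s) * s = s - 1"
    using s by (simp add: field_simps)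
  also have "A powr 1 * B powr (s - 1) = B powr (s - 1) * A"
    using \<open>A \<ge> 0\<close> by simp
  finally show ?thesis by (simp add: A_def B_def)
qed

lemma sum_sum_glue_weights_left:
  fixes Q1 :: "'a \<Rightarrow> 'b::finite \<Rightarrow> real" and Q2 :: "'b \<Rightarrow> 'c::finite \<Rightarrow> real"
  assumes "\<And>j. (\<Sum>k\<in>UNIV. Q2 j k) = c j" and "\<And>j. c j = 0 \<Longrightarrow> Q1 i j = 0"
  shows "(\<Sum>k\<in>UNIV. \<Sum>j\<in>UNIV. Q1 i j * Q2 j k / c j * g j) = (\<Sum>j\<in>UNIV. Q1 i j * g j)"
proof -
  have "(\<Sum>k\<in>UNIV. \<Sum>j\<in>UNIV. Q1 i j * Q2 j k / c j * g j)
      = (\<Sum>j\<in>UNIV. Q1 i j * g j * ((\<Sum>k\<in>UNIV. Q2 j k) / c j))"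
    by (subst sum.swap) (simp add: sum_distrib_left sum_divide_distrib mult_ac)
  also have "\<dots> = (\<Sum>j\<in>UNIV. Q1 i j * g j)"
    using assms by (intro sum.cong) auto
  finally show ?thesis .
qed

lemma sum_sum_glue_weights_right:
  fixes Q1 :: "'a::finite \<Rightarrow> 'b::finite \<Rightarrow> real" and Q2 :: "'b \<Rightarrow> 'c \<Rightarrow> real"
  assumes "\<And>j. (\<Sum>i\<in>UNIV. Q1 i j) = c j" and "\<And>j. c j = 0 \<Longrightarrow> Q2 j k = 0"
  shows "(\<Sum>i\<in>UNIV. \<Sum>j\<in>UNIV. Q1 i j * Q2 j k / c j * h j) = (\<Sum>j\<in>UNIV. Q2 j k * h j)"
proof -
  have "(\<Sum>i\<in>UNIV. \<Sum>j\<in>UNIV. Q1 i j * Q2 j k / c j * h j)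
      = (\<Sum>j\<in>UNIV. Q2 j k * h j * ((\<Sum>i\<in>UNIV. Q1 i j) / c j))"
    by (subst sum.swap) (simp add: sum_distrib_left sum_divide_distrib mult_ac)
  also have "\<dots> = (\<Sum>j\<in>UNIV. Q2 j k * h j)"
    using assms by (intro sum.cong) auto
  finally show ?thesis .
qed

text \<open>The junk value of division by c j = 0 is harmless: then row j of Q2 and column j of Q1 vanish.\<close>

definition glue :: "('n \<Rightarrow> 'n::finite \<Rightarrow> real) \<Rightarrow> ('n \<Rightarrow> 'n \<Rightarrow> real) \<Rightarrow> ('n \<Rightarrow> real) \<Rightarrow> 'n \<Rightarrow> 'n \<Rightarrow> real" where
  "glue Q1 Q2 c i k = (\<Sum>j\<in>UNIV. Q1 i j * Q2 j k / c j)"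

context
  fixes Q1 Q2 :: "'n::finite \<Rightarrow> 'n \<Rightarrow> real" and c :: "'n \<Rightarrow> real"
  assumes Q1_nonneg: "\<And>i j. 0 \<le> Q1 i j" and Q2_nonneg: "\<And>j k. 0 \<le> Q2 j k"
    and Q1_col_sum: "\<And>j. (\<Sum>i\<in>UNIV. Q1 i j) = c j"
    and Q2_row_sum: "\<And>j. (\<Sum>k\<in>UNIV. Q2 j k) = c j"
begin

lemma glue_vanishing:
  assumes "c j = 0"
  shows "Q1 i j = 0" and "Q2 j k = 0"
  using assms Q1_nonneg Q2_nonneg Q1_col_sum[of j] Q2_row_sum[of j]
  by (simp_all add: sum_nonneg_eq_0_iff)

lemma glue_weight_nonneg: "0 \<le> Q1 i j * Q2 j k / c j"
proof -
  have "0 \<le> c j"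
    using Q1_col_sum[of j] Q1_nonneg by (metis sum_nonneg)
  then show ?thesis
    using Q1_nonneg Q2_nonneg by simp
qed

lemma glue_nonneg: "0 \<le> glue Q1 Q2 c i k"
  unfolding glue_def using glue_weight_nonneg by (rule sum_nonneg)

lemma glue_row_sum: "(\<Sum>k\<in>UNIV. glue Q1 Q2 c i k) = (\<Sum>j\<in>UNIV. Q1 i j)"
  using sum_sum_glue_weights_left[of Q2 c Q1 i "\<lambda>_. 1", OF Q2_row_sum glue_vanishing(1)]
  by (simp add: glue_def)

lemma glue_col_sum: "(\<Sum>i\<in>UNIV. glue Q1 Q2 c i k) = (\<Sum>j\<in>UNIV. Q2 j k)"
  using sum_sum_glue_weights_right[of Q1 c Q2 k "\<lambda>_. 1", OF Q1_col_sum glue_vanishing(2)]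
  by (simp add: glue_def)

lemma glue_cost_le:
  fixes M :: "'n \<Rightarrow> 'n \<Rightarrow> real"
  assumes triangle: "\<And>i j k. M i k \<le> M i j + M j k"
  shows "frob (glue Q1 Q2 c) M \<le> frob Q1 M + frob Q2 M"
proof -
  let ?w = "\<lambda>i j k. Q1 i j * Q2 j k / c j"
  have "frob (glue Q1 Q2 c) M = (\<Sum>i\<in>UNIV. \<Sum>k\<in>UNIV. \<Sum>j\<in>UNIV. ?w i j k * M i k)"
    by (simp add: frob_def glue_def sum_distrib_right)
  also have "\<dots> \<le> (\<Sum>i\<in>UNIV. \<Sum>k\<in>UNIV. \<Sum>j\<in>UNIV. ?w i j k * (M i j + M j k))"
    using glue_weight_nonneg triangle by (intro sum_mono mult_left_mono)
  also have "\<dots> = (\<Sum>i\<in>UNIV. \<Sum>k\<in>UNIV. \<Sum>j\<in>UNIV. ?w i j k * M i j)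
                + (\<Sum>i\<in>UNIV. \<Sum>k\<in>UNIV. \<Sum>j\<in>UNIV. ?w i j k * M j k)"
    by (simp add: distrib_left sum.distrib)
  also have "\<dots> = frob Q1 M + (\<Sum>k\<in>UNIV. \<Sum>j\<in>UNIV. Q2 j k * M j k)"
  proof -
    have left: "(\<Sum>k\<in>UNIV. \<Sum>j\<in>UNIV. ?w i j k * M i j) = (\<Sum>j\<in>UNIV. Q1 i j * M i j)" for i
      by (rule sum_sum_glue_weights_left[of Q2 c Q1 i "M i", OF Q2_row_sum glue_vanishing(1)])
    have right: "(\<Sum>i\<in>UNIV. \<Sum>j\<in>UNIV. ?w i j k * M j k) = (\<Sum>j\<in>UNIV. Q2 j k * M j k)" for k
      by (rule sum_sum_glue_weights_right[of Q1 c Q2 k "\<lambda>j. M j k", OF Q1_col_sum glue_vanishing(2)])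
    have "(\<Sum>i\<in>UNIV. \<Sum>k\<in>UNIV. \<Sum>j\<in>UNIV. ?w i j k * M j k) = (\<Sum>k\<in>UNIV. \<Sum>j\<in>UNIV. Q2 j k * M j k)"
      by (subst sum.swap) (simp only: right)
    then show ?thesis
      by (simp only: left frob_def)
  qed
  also have "\<dots> = frob Q1 M + frob Q2 M"
    unfolding frob_def by (subst (2) sum.swap) simp
  finally show ?thesis .
qed

end

lemma frob_nonneg:
  assumes "\<And>i j. 0 \<le> P i j" "\<And>i j. 0 \<le> M i j"
  shows "0 \<le> frob P M"
  unfolding frob_def using assms by (intro sum_nonneg mult_nonneg_nonneg)

lemma frob_mono_left:
  assumes "\<And>i j. P i j \<le> P' i j" "\<And>i j. 0 \<le> M i j"
  shows "frob P M \<le> frob P' M"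
  unfolding frob_def using assms by (intro sum_mono mult_right_mono)

lemma frob_powr_inverse_le:
  fixes M Q :: "'n::finite \<Rightarrow> 'n \<Rightarrow> real"
  assumes "\<And>i j. 0 \<le> M i j" "\<And>i j. 0 \<le> Q i j" "1 \<le> s"
  shows "frob (\<lambda>i j. Q i j powr (1 / s)) M powr s \<le> (\<Sum>i\<in>UNIV. \<Sum>j\<in>UNIV. M i j) powr (s - 1) * frob Q M"
  using powr_sum_mult_powr_inverse_le[of "UNIV :: ('n \<times> 'n) set" "case_prod M" "case_prod Q" s] assms
  by (simp add: frob_def sum.cartesian_product split_beta mult.commute)

lemma one_div_tstar: "1 / tstar t = 2 - t"
  by (simp add: tstar_def)

lemma outer_product_in_co_polytope:
  assumes "r \<in> co_simplex t" "c \<in> co_simplex t"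
  shows "(\<lambda>i j. r i * c j) \<in> co_polytope t r c"
  using assms
  by (auto simp: co_simplex_def co_polytope_def powr_mult simp flip: sum_distrib_left sum_distrib_right)

lemma co_polytope_entry_le_one:
  assumes "P \<in> co_polytope t r c" "r \<in> co_simplex t" "t < 2"
  shows "P i j \<le> 1"
proof -
  have "P i j powr (2 - t) \<le> (\<Sum>j\<in>UNIV. P i j powr (2 - t))"
    by (rule member_le_sum) auto
  also have "\<dots> = r i powr (2 - t)"
    using assms(1) by (simp add: co_polytope_def one_div_tstar)
  also have "\<dots> \<le> (\<Sum>i\<in>UNIV. r i powr (2 - t))"
    by (rule member_le_sum) auto
  also have "\<dots> = 1"
    using assms(2) by (simp add: co_simplex_def one_div_tstar)
  finally have "P i j powr (2 - t) \<le> 1" .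
  then show ?thesis
    using powr_less_mono2[of "2 - t" 1 "P i j"] assms(3) by fastforce
qed

lemma co_polytope_entry_powr_le:
  assumes "P \<in> co_polytope t r c" "r \<in> co_simplex t" "t \<le> 1"
  shows "P i j powr (2 - t) \<le> P i j"
proof -
  have "0 \<le> P i j" "P i j \<le> 1"
    using assms co_polytope_entry_le_one[OF assms(1,2)] by (auto simp: co_polytope_def)
  then have "P i j powr (2 - t) \<le> P i j powr 1"
    using assms(3) by (intro powr_mono') auto
  with \<open>0 \<le> P i j\<close> show ?thesis by simp
qed

lemma powr_inverse_in_co_polytope:
  assumes "\<And>i j. 0 \<le> Q i j" "t < 2"
    and "\<And>i. (\<Sum>j\<in>UNIV. Q i j) = r i powr (2 - t)"
    and "\<And>j. (\<Sum>i\<in>UNIV. Q i j) = c j powr (2 - t)"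
  shows "(\<lambda>i j. Q i j powr (1 / (2 - t))) \<in> co_polytope t r c"
  using assms by (simp add: co_polytope_def one_div_tstar powr_powr)

lemma measured_cost_le:
  assumes "P \<in> co_polytope t r c" "\<And>i j. 0 \<le> M i j"
  shows "measured_cost t M r c \<le> frob P M"
  unfolding measured_cost_def
proof (rule cInf_lower)
  show "bdd_below ((\<lambda>P. frob P M) ` co_polytope t r c)"
    using assms(2) by (intro bdd_belowI[of _ 0]) (auto simp: co_polytope_def intro: frob_nonneg)
qed (use assms in auto)

lemma measured_cost_nonneg:
  assumes "co_polytope t r c \<noteq> {}" "\<And>i j. 0 \<le> M i j"
  shows "0 \<le> measured_cost t M r c"
  unfolding measured_cost_def using assms
  by (intro cInf_greatest) (auto simp: co_polytope_def intro: frob_nonneg)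

lemma measured_cost_powr_le_frob_add:
  fixes M :: "'n::finite \<Rightarrow> 'n \<Rightarrow> real"
  assumes t: "t \<le> 1" and M: "distance_matrix M"
    and x: "x \<in> co_simplex t" and y: "y \<in> co_simplex t" and z: "z \<in> co_simplex t"
    and P1: "P1 \<in> co_polytope t x y" and P2: "P2 \<in> co_polytope t y z"
  shows "measured_cost t M x z powr (2 - t)
     \<le> (\<Sum>i\<in>UNIV. \<Sum>j\<in>UNIV. M i j) powr (1 - t) * (frob P1 M + frob P2 M)"
proof -
  define s where "s = 2 - t"
  have "1 \<le> s" using t by (simp add: s_def)
  have M_nonneg: "\<And>i j. 0 \<le> M i j" and triangle: "\<And>i j k. M i k \<le> M i j + M j k"
    using M by (auto simp: distance_matrix_def)
  define Q1 where "Q1 = (\<lambda>i j. P1 i j powr s)"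
  define Q2 where "Q2 = (\<lambda>i j. P2 i j powr s)"
  define Q where "Q = glue Q1 Q2 (\<lambda>j. y j powr s)"
  have Q1_sums: "(\<Sum>j\<in>UNIV. Q1 i j) = x i powr s" "(\<Sum>i\<in>UNIV. Q1 i j) = y j powr s" for i j
    using P1 by (simp_all add: co_polytope_def one_div_tstar Q1_def s_def)
  have Q2_sums: "(\<Sum>k\<in>UNIV. Q2 j k) = y j powr s" "(\<Sum>j\<in>UNIV. Q2 j k) = z k powr s" for j k
    using P2 by (simp_all add: co_polytope_def one_div_tstar Q2_def s_def)
  have Q1_nonneg: "\<And>i j. 0 \<le> Q1 i j" and Q2_nonneg: "\<And>i j. 0 \<le> Q2 i j"
    by (simp_all add: Q1_def Q2_def)
  note glue_facts = glue_nonneg glue_row_sum glue_col_sum glue_cost_le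
  note Q_facts = glue_facts[of Q1 Q2, OF Q1_nonneg Q2_nonneg Q1_sums(2) Q2_sums(1), folded Q_def]
  have "(\<lambda>i k. Q i k powr (1 / s)) \<in> co_polytope t x z"
    unfolding s_def using Q_facts(1) t
    by (intro powr_inverse_in_co_polytope) (simp_all add: Q_facts(2,3) Q1_sums Q2_sums s_def)
  then have "measured_cost t M x z \<le> frob (\<lambda>i k. Q i k powr (1 / s)) M"
    using M_nonneg by (rule measured_cost_le)
  moreover have "0 \<le> measured_cost t M x z"
    using outer_product_in_co_polytope[OF x z] M_nonneg by (intro measured_cost_nonneg) auto
  ultimately have "measured_cost t M x z powr s \<le> frob (\<lambda>i k. Q i k powr (1 / s)) M powr s"
    using \<open>1 \<le> s\<close> by (intro powr_mono2) auto
  also have "\<dots> \<le> (\<Sum>i\<in>UNIV. \<Sum>j\<in>UNIV. M i j) powr (s - 1) * frob Q M"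
    using M_nonneg Q_facts(1) \<open>1 \<le> s\<close> by (rule frob_powr_inverse_le)
  also have "\<dots> \<le> (\<Sum>i\<in>UNIV. \<Sum>j\<in>UNIV. M i j) powr (s - 1) * (frob Q1 M + frob Q2 M)"
    by (rule mult_left_mono[OF Q_facts(4)[OF triangle]]) simp
  also have "\<dots> \<le> (\<Sum>i\<in>UNIV. \<Sum>j\<in>UNIV. M i j) powr (s - 1) * (frob P1 M + frob P2 M)"
  proof -
    have "Q1 i j \<le> P1 i j" "Q2 i j \<le> P2 i j" for i j
      unfolding Q1_def Q2_def s_def
      by (rule co_polytope_entry_powr_le[OF P1 x t], rule co_polytope_entry_powr_le[OF P2 y t])
    then show ?thesis
      by (intro mult_left_mono add_mono frob_mono_left M_nonneg) simp_all
  qed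
  also have "s - 1 = 1 - t"
    by (simp add: s_def)
  finally show ?thesis
    by (simp only: s_def)
qed

lemma le_mult_Inf_add_Inf:
  fixes A B :: "real set"
  assumes "A \<noteq> {}" "B \<noteq> {}" "0 \<le> K" "\<And>a b. a \<in> A \<Longrightarrow> b \<in> B \<Longrightarrow> v \<le> K * (a + b)"
  shows "v \<le> K * (Inf A + Inf B)"
proof (cases "K = 0")
  case True
  with assms show ?thesis by auto
next
  case False
  with \<open>0 \<le> K\<close> have "0 < K" by simp
  have "v / K - b \<le> a" if "a \<in> A" "b \<in> B" for a b
    using assms(4)[OF that] \<open>0 < K\<close> by (simp add: pos_divide_le_eq algebra_simps)
  then have "v / K - b \<le> Inf A" if "b \<in> B" for b
    using assms(1) that by (intro cInf_greatest) auto
  then have "v / K - Inf A \<le> Inf B"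
    using assms(2) by (intro cInf_greatest) force+
  with \<open>0 < K\<close> show ?thesis by (simp add: field_simps)
qed

theorem proposition1:
  fixes t :: real and M :: "'n::finite \<Rightarrow> 'n \<Rightarrow> real" and x y z :: "'n \<Rightarrow> real"
  assumes "t \<le> 1"
    and "distance_matrix M"
    and "x \<in> co_simplex t" and "y \<in> co_simplex t" and "z \<in> co_simplex t"
  shows "(measured_cost t M x z) powr (2 - t)
     \<le> (\<Sum>i\<in>UNIV. \<Sum>j\<in>UNIV. M i j) powr (1 - t) * (measured_cost t M x y + measured_cost t M y z)"
  unfolding measured_cost_def[of t M x y] measured_cost_def[of t M y z]
  using assms outer_product_in_co_polytope
  by (intro le_mult_Inf_add_Inf) (auto intro: measured_cost_powr_le_frob_add)

end
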